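(* If $\alpha>\alpha^*(V)$, then for almost every realization of $\mathcal N$ the clan of ancestors $\mathcal A^{(\gamma,t,s)}$ of every point $(\gamma,t,s)\in\Gamma\times\mathbb{R}\times\mathbb{R}^+$ is finite.
   Context: Let $V:\mathbb{Z}^d\to\mathbb{R}^+\cup\{+\infty\}$ be strictly convex with $V(\vec0)=0$, and $\alpha>0$. $\Gamma$ is the set of finite cycles of $\mathbb{Z}^d$ (a cycle of length $|\gamma|=n\ge2$ on distinct sites $x_1,\dots,x_n$ maps $x_i\mapsto x_{i+1}$ mod $n$ and fixes other sites; support $\{\gamma\}$); $w(\gamma)=\exp\{-\alpha\sum_{x\in\{\gamma\}}V(\gamma(x)-x)\}$; $\beta(V,\alpha)=\sum_{\gamma\in\Gamma,\vec0\in\{\gamma\}}|\gamma|w(\gamma)$; $\alpha^*(V)=\inf\{\alpha:\beta(V,\alpha)<1\}$. $\gamma\not\sim\gamma'$ if supports intersect. $\mathcal N$ is a Poisson point process on $\Gamma\times\mathbb{R}\times\mathbb{R}^+$ with intensity $w(\gamma)\,dt\,e^{-s}ds$. For $\varphi=(\gamma,t,s)$: $\mathcal A_1^\varphi=\{(\gamma',t',s')\in\mathcal N:\gamma'\not\sim\gamma,\ t'<t<t'+s'\}$, $\mathcal A_{n+1}^\varphi=\bigcup_{\varphi'\in\mathcal A_n^\varphi}\mathcal A_1^{\varphi'}$, and the clan of ancestors is $\mathcal A^\varphi=\bigcup_{n\ge1}\mathcal A_n^\varphi$. *)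

theory Defs
  imports "HOL-Probability.Probability" "HOL-Combinatorics.Cycles"
begin

type_synonym 'd site = "int ^ 'd"
type_synonym 'd cyc = "'d site \<Rightarrow> 'd site"
type_synonym 'd point = "'d cyc \<times> real \<times> real"

definition cycles :: "('d::finite) cyc set" where
  "cycles = {cycle_of_list xs | xs. distinct xs \<and> length xs \<ge> 2}"

definition supp :: "('d::finite) cyc \<Rightarrow> 'd site set" where
  "supp g = {x. g x \<noteq> x}"

definition strictly_convex_lattice :: "(('d::finite) site \<Rightarrow> ereal) \<Rightarrow> bool" where
  "strictly_convex_lattice V \<longleftrightarrow>
     (\<forall>x y z (u::real). x \<noteq> y \<and> 0 < u \<and> u < 1 \<and> V x < \<infinity> \<and> V y < \<infinity> \<and>
        (\<forall>i. real_of_int (z $ i) = u * real_of_int (x $ i) + (1 - u) * real_of_int (y $ i))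
        \<longrightarrow> V z < ereal u * V x + ereal (1 - u) * V y)"

definition weight :: "(('d::finite) site \<Rightarrow> ereal) \<Rightarrow> real \<Rightarrow> 'd cyc \<Rightarrow> real" where
  "weight V \<alpha> g = (let S = (\<Sum>x\<in>supp g. V (g x - x)) in
      if S = \<infinity> then 0 else exp (- \<alpha> * real_of_ereal S))"

definition beta :: "(('d::finite) site \<Rightarrow> ereal) \<Rightarrow> real \<Rightarrow> ennreal" where
  "beta V \<alpha> = (\<Sum>\<^sub>\<infinity> g \<in> {g \<in> cycles. 0 \<in> supp g}. ennreal (real (card (supp g)) * weight V \<alpha> g))"

definition alpha_star :: "(('d::finite) site \<Rightarrow> ereal) \<Rightarrow> ereal" where
  "alpha_star V = Inf {ereal \<alpha> | \<alpha>. \<alpha> > 0 \<and> beta V \<alpha> < 1}"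

definition intensity :: "(('d::finite) site \<Rightarrow> ereal) \<Rightarrow> real \<Rightarrow> 'd point measure" where
  "intensity V \<alpha> =
     density (count_space cycles) (\<lambda>g. ennreal (weight V \<alpha> g))
     \<Otimes>\<^sub>M (lborel :: real measure)
     \<Otimes>\<^sub>M density (restrict_space lborel {0..}) (\<lambda>s. ennreal (exp (- s)))"

definition poisson_point_process :: "'w measure \<Rightarrow> 'p measure \<Rightarrow> ('w \<Rightarrow> 'p set) \<Rightarrow> bool" where
  "poisson_point_process M \<mu> N \<longleftrightarrow>
     prob_space M \<and>
     (\<forall>\<omega>\<in>space M. N \<omega> \<subseteq> space \<mu>) \<and>
     (\<forall>B \<in> sets \<mu>. emeasure \<mu> B < \<infinity> \<longrightarrow>
        (AE \<omega> in M. finite (N \<omega> \<inter> B)) \<and>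
        (\<forall>k::nat. {\<omega> \<in> space M. card (N \<omega> \<inter> B) = k} \<in> sets M \<and>
           measure M {\<omega> \<in> space M. card (N \<omega> \<inter> B) = k} =
             exp (- enn2real (emeasure \<mu> B)) * enn2real (emeasure \<mu> B) ^ k / fact k)) \<and>
     (\<forall>(I::nat set) B. finite I \<longrightarrow> disjoint_family_on B I \<longrightarrow>
        (\<forall>i\<in>I. B i \<in> sets \<mu> \<and> emeasure \<mu> (B i) < \<infinity>) \<longrightarrow>
        prob_space.indep_vars M (\<lambda>_. count_space UNIV) (\<lambda>i \<omega>. card (N \<omega> \<inter> B i)) I)"

definition anc1 :: "('d::finite) point set \<Rightarrow> 'd point \<Rightarrow> 'd point set" where
  "anc1 Nw \<phi> = {(g', t', s') \<in> Nw. supp g' \<inter> supp (fst \<phi>) \<noteq> {} \<and>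
                   t' < fst (snd \<phi>) \<and> fst (snd \<phi>) < t' + s'}"

text \<open>ancn Nw n phi is A_{n+1}^phi.\<close>
fun ancn :: "('d::finite) point set \<Rightarrow> nat \<Rightarrow> 'd point \<Rightarrow> 'd point set" where
  "ancn Nw 0 \<phi> = anc1 Nw \<phi>"
| "ancn Nw (Suc n) \<phi> = (\<Union>\<phi>'\<in>ancn Nw n \<phi>. anc1 Nw \<phi>')"

definition clan :: "('d::finite) point set \<Rightarrow> 'd point \<Rightarrow> 'd point set" where
  "clan Nw \<phi> = (\<Union>n. ancn Nw n \<phi>)"

end

theory Submission
  imports Defs "HOL-Real_Asymp.Real_Asymp"
begin

text \<open>Discretise birth times and lifetimes into slots of length \<open>\<delta>\<close>. A chain of \<open>n\<close> successive
  ancestors of a point with cycle \<open>\<gamma>\<close> occupies a chain of \<open>n\<close> cells, each cycle meeting the previous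
  one and each birth slot compatible with the previous one. Poisson counts in disjoint cells are
  independent with \<open>P(N(B) \<ge> k) \<le> \<mu>(B)\<^sup>k\<close>, and translation invariance bounds the weight of the cycles
  meeting \<open>\<gamma>\<close> by \<open>|\<gamma>| \<beta>(V,\<alpha>)\<close>; so such a chain exists with probability at most
  \<open>|\<gamma>| (\<beta>(V,\<alpha>) h(\<delta>))\<^sup>n\<close>, where \<open>h(\<delta>) \<rightarrow> 1\<close> accounts for the overlap in time. For \<open>\<alpha> > \<alpha>\<^sup>*(V)\<close>
  we have \<open>\<beta> < 1\<close>, hence for small \<open>\<delta>\<close> almost surely the chains descending from every cycle and
  time slot have bounded length. Each generation of ancestors is almost surely finite because the
  region where ancestors can live has finite intensity, so every clan is finite.\<close>

section \<open>Cycles and the weight \<open>\<beta>\<close>\<close>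

lemma finite_supp_cycle:
  assumes "g \<in> cycles" shows "finite (supp g)"
proof -
  from assms obtain xs where g: "g = cycle_of_list xs" unfolding cycles_def by auto
  have "supp g \<subseteq> set xs" unfolding supp_def g using id_outside_supp by fastforce
  then show ?thesis by (rule finite_subset) simp
qed

lemma supp_cycle_nonempty:
  assumes "g \<in> cycles" shows "supp g \<noteq> {}"
proof -
  from assms obtain xs where g: "g = cycle_of_list xs" "distinct xs" "length xs \<ge> 2"
    unfolding cycles_def by auto
  obtain a b r where xs: "xs = a # b # r" using g(3) by (cases xs; cases "tl xs") auto
  have "map g xs = rotate1 xs" using cyclic_rotation[OF g(2), of 1] g(1) by simp
  then have "g a = b" unfolding xs by simp
  moreover have "a \<noteq> b" using g(2) unfolding xs by auto
  ultimately have "g a \<noteq> a" by simp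
  then show ?thesis unfolding supp_def by auto
qed

lemma card_supp_cycle_ge_1: "g \<in> cycles \<Longrightarrow> card (supp g) \<ge> 1"
  using supp_cycle_nonempty[of g] finite_supp_cycle[of g] by (simp add: Suc_le_eq card_gt_0_iff)

lemma countable_cycles: "countable (cycles :: ('d::finite) cyc set)"
proof (rule countable_subset)
  show "cycles \<subseteq> range (cycle_of_list :: 'd site list \<Rightarrow> 'd cyc)"
    unfolding cycles_def by auto
qed simp

definition translate_cyc :: "('d::finite) site \<Rightarrow> 'd cyc \<Rightarrow> 'd cyc" where
  "translate_cyc a g = (\<lambda>x. g (x - a) + a)"

lemma translate_cyc_cycle_of_list:
  fixes xs :: "('d::finite) site list"
  assumes "distinct xs"
  shows "translate_cyc a (cycle_of_list xs) = cycle_of_list (map (\<lambda>x. x + a) xs)"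
proof -
  have bij: "bij (\<lambda>x::'d site. x + a)"
    by (rule bijI) (auto simp: inj_def surj_def intro!: exI[of _ "_ - a"])
  have inv: "inv (\<lambda>x::'d site. x + a) = (\<lambda>x. x - a)"
    by (rule inv_equality) auto
  show ?thesis
    using conjugation_of_cycle[OF assms bij] unfolding inv translate_cyc_def
    by (auto simp: fun_eq_iff)
qed

lemma supp_translate_cyc: "supp (translate_cyc a g) = (\<lambda>y. y + a) ` supp g"
proof -
  have "supp (translate_cyc a g) = {x. g (x - a) \<noteq> x - a}"
    unfolding supp_def translate_cyc_def by (auto simp: algebra_simps)
  also have "\<dots> = (\<lambda>y. y + a) ` supp g"
    unfolding supp_def by (auto simp: image_iff intro!: exI[of _ "_ - a"])
  finally show ?thesis .
qed

lemma translate_cyc_in_cycles: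
  assumes "g \<in> cycles" shows "translate_cyc a g \<in> cycles"
proof -
  from assms obtain xs where g: "g = cycle_of_list xs" "distinct xs" "length xs \<ge> 2"
    unfolding cycles_def by auto
  have "distinct (map (\<lambda>x. x + a) xs)" using g by (simp add: distinct_map inj_on_def)
  then show ?thesis
    unfolding cycles_def g(1) translate_cyc_cycle_of_list[OF g(2)] using g(3) by auto
qed

lemma translate_cyc_neg: "translate_cyc (- a) (translate_cyc a g) = g"
  unfolding translate_cyc_def by (auto simp: fun_eq_iff)

lemma card_supp_translate_cyc: "card (supp (translate_cyc a g)) = card (supp g)"
  unfolding supp_translate_cyc by (rule card_image) (auto simp: inj_on_def)

lemma weight_translate_cyc: "weight V \<alpha> (translate_cyc a g) = weight V \<alpha> g"
proof -
  have "(\<Sum>x\<in>supp (translate_cyc a g). V (translate_cyc a g x - x)) = (\<Sum>x\<in>supp g. V (g x - x))"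
    unfolding supp_translate_cyc by (subst sum.reindex) (auto simp: inj_on_def translate_cyc_def)
  then show ?thesis unfolding weight_def by simp
qed

lemma weight_nonneg: "weight V \<alpha> g \<ge> 0"
  unfolding weight_def Let_def by auto

lemma weight_antimono:
  assumes V: "\<And>x. V x \<ge> 0" and "\<alpha>' \<le> \<alpha>"
  shows "weight V \<alpha> g \<le> weight V \<alpha>' g"
proof -
  define S where "S = (\<Sum>x\<in>supp g. V (g x - x))"
  have "S \<ge> 0" unfolding S_def using V by (intro sum_nonneg) auto
  then have "real_of_ereal S \<ge> 0" by (simp add: real_of_ereal_pos)
  then have "- \<alpha> * real_of_ereal S \<le> - \<alpha>' * real_of_ereal S"
    using assms(2) by (intro mult_right_mono) auto
  then show ?thesis unfolding weight_def S_def[symmetric] Let_def by simp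
qed

abbreviation beta_summand :: "(('d::finite) site \<Rightarrow> ereal) \<Rightarrow> real \<Rightarrow> 'd cyc \<Rightarrow> ennreal" where
  "beta_summand V \<alpha> g \<equiv> ennreal (real (card (supp g)) * weight V \<alpha> g)"

lemma beta_antimono:
  assumes "\<And>x. V x \<ge> 0" and "\<alpha>' \<le> \<alpha>"
  shows "beta V \<alpha> \<le> beta V \<alpha>'"
  unfolding beta_def
proof (rule infsum_mono)
  fix g
  show "beta_summand V \<alpha> g \<le> beta_summand V \<alpha>' g"
    by (intro ennreal_leI mult_left_mono weight_antimono[OF assms]) auto
qed (rule nonneg_summable_on_complete, simp)+

lemma beta_less_1:
  assumes "\<And>x. V x \<ge> 0" and "ereal \<alpha> > alpha_star V"
  shows "beta V \<alpha> < 1"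
proof -
  obtain \<alpha>' where "\<alpha>' < \<alpha>" "beta V \<alpha>' < 1"
    using assms(2) unfolding alpha_star_def Inf_less_iff by auto
  then show ?thesis using beta_antimono[of V, OF assms(1), of \<alpha>' \<alpha>] by simp
qed

text \<open>By translation invariance, the cycles through any fixed site carry the same total mass as
  those through the origin.\<close>

lemma sum_beta_summand_through_le:
  assumes "finite F" "F \<subseteq> cycles" "\<And>h. h \<in> F \<Longrightarrow> x \<in> supp h"
  shows "(\<Sum>h\<in>F. beta_summand V \<alpha> h) \<le> beta V \<alpha>"
proof -
  let ?G = "translate_cyc (- x) ` F"
  have inj: "inj_on (translate_cyc (- x)) F"
    by (metis inj_on_inverseI translate_cyc_neg minus_minus)
  have "(\<Sum>h\<in>F. beta_summand V \<alpha> h) = (\<Sum>h\<in>?G. beta_summand V \<alpha> h)"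
    by (subst sum.reindex[OF inj]) (simp add: card_supp_translate_cyc weight_translate_cyc)
  also have "\<dots> \<le> (SUP H\<in>{H. finite H \<and> H \<subseteq> {g \<in> cycles. 0 \<in> supp g}}. sum (beta_summand V \<alpha>) H)"
    by (rule SUP_upper) (use assms in \<open>auto simp: translate_cyc_in_cycles supp_translate_cyc
          image_iff intro!: bexI[of _ x]\<close>)
  also have "\<dots> = beta V \<alpha>"
    unfolding beta_def by (rule nonneg_infsum_complete[symmetric]) simp
  finally show ?thesis .
qed

lemma sum_beta_summand_meeting_le:
  assumes F: "finite F" "F \<subseteq> cycles" "\<And>h. h \<in> F \<Longrightarrow> supp h \<inter> supp g \<noteq> {}"
    and g: "g \<in> cycles"
  shows "(\<Sum>h\<in>F. beta_summand V \<alpha> h) \<le> of_nat (card (supp g)) * beta V \<alpha>"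
proof -
  let ?f = "\<lambda>x h. if x \<in> supp h then beta_summand V \<alpha> h else 0"
  have "(\<Sum>h\<in>F. beta_summand V \<alpha> h) \<le> (\<Sum>h\<in>F. \<Sum>x\<in>supp g. ?f x h)"
  proof (rule sum_mono)
    fix h assume "h \<in> F"
    then obtain x where x: "x \<in> supp h" "x \<in> supp g" using F by blast
    have "beta_summand V \<alpha> h = (\<Sum>y\<in>{x}. ?f y h)" using x by simp
    also have "\<dots> \<le> (\<Sum>y\<in>supp g. ?f y h)"
      by (rule sum_mono2) (use x finite_supp_cycle[OF g] in auto)
    finally show "beta_summand V \<alpha> h \<le> (\<Sum>y\<in>supp g. ?f y h)" .
  qed
  also have "\<dots> = (\<Sum>x\<in>supp g. \<Sum>h\<in>{h\<in>F. x \<in> supp h}. beta_summand V \<alpha> h)"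
    by (subst sum.swap) (simp add: sum.inter_filter[symmetric] F)
  also have "\<dots> \<le> (\<Sum>x\<in>supp g. beta V \<alpha>)"
    by (intro sum_mono sum_beta_summand_through_le) (use F in auto)
  finally show ?thesis by simp
qed

section \<open>The intensity measure on cells\<close>

definition lifetime_measure :: "real measure" where
  "lifetime_measure = density (restrict_space lborel {0..}) (\<lambda>s. ennreal (exp (- s)))"

lemma intensity_eq_pair_measure:
  "intensity V \<alpha> = density (count_space cycles) (\<lambda>g. ennreal (weight V \<alpha> g))
     \<Otimes>\<^sub>M (lborel \<Otimes>\<^sub>M lifetime_measure)"
  unfolding intensity_def lifetime_measure_def by simp

lemma space_intensity: "space (intensity V \<alpha>) = cycles \<times> UNIV \<times> {0..}"
  unfolding intensity_eq_pair_measure by (simp add: space_pair_measure lifetime_measure_def)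

lemma sigma_finite_lifetime_measure: "sigma_finite_measure lifetime_measure"
proof -
  have sf: "sigma_finite_measure (restrict_space lborel {0::real..})"
    by (rule sigma_finite_measure_restrict_space) (auto simp: lborel.sigma_finite_measure_axioms)
  show ?thesis unfolding lifetime_measure_def
    by (subst sigma_finite_measure.sigma_finite_iff_density_finite'[OF sf])
       (auto intro!: measurable_restrict_space1)
qed

lemma nn_integral_exp_neg_interval_le:
  assumes "a \<le> b"
  shows "(\<integral>\<^sup>+x. ennreal (exp (- x)) * indicator {a..<b} x \<partial>lborel) \<le> ennreal (exp (- a) - exp (- b))"
proof -
  have "((\<lambda>x. exp (- x)) has_integral ((- exp (- b)) - (- exp (- a)))) {a..b}"
    by (rule fundamental_theorem_of_calculus[OF assms])
       (auto intro!: derivative_eq_intros simp: has_real_derivative_iff_has_vector_derivative[symmetric])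
  moreover have "(\<lambda>x. exp (- x) * indicator {a..b} x) = (\<lambda>x. if x \<in> {a..b} then exp (- x) else 0)"
    by (auto simp: fun_eq_iff indicator_def)
  ultimately have "((\<lambda>x. exp (- x) * indicator {a..b} x) has_integral (exp (- a) - exp (- b))) UNIV"
    using has_integral_restrict_UNIV[of "{a..b}" "\<lambda>x. exp (- x)"] by simp
  then have "(\<integral>\<^sup>+x. ennreal (exp (- x) * indicator {a..b} x) \<partial>lborel) = ennreal (exp (- a) - exp (- b))"
    by (intro nn_integral_has_integral_lborel) auto
  moreover have "(\<integral>\<^sup>+x. ennreal (exp (- x)) * indicator {a..<b} x \<partial>lborel)
      \<le> (\<integral>\<^sup>+x. ennreal (exp (- x) * indicator {a..b} x) \<partial>lborel)"
    by (rule nn_integral_mono) (auto simp: indicator_def)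
  ultimately show ?thesis by simp
qed

lemma lifetime_measure_interval:
  assumes "0 \<le> a" "a \<le> b"
  shows "{a..<b} \<in> sets lifetime_measure"
    "emeasure lifetime_measure {a..<b} \<le> ennreal (exp (- a) - exp (- b))"
proof -
  show A: "{a..<b} \<in> sets lifetime_measure"
    unfolding lifetime_measure_def sets_density using assms by (subst sets_restrict_space_iff) auto
  have "emeasure lifetime_measure {a..<b}
      = (\<integral>\<^sup>+x. ennreal (exp (- x)) * indicator {a..<b} x \<partial>restrict_space lborel {0..})"
    unfolding lifetime_measure_def
    by (rule emeasure_density) (use A in \<open>auto simp: lifetime_measure_def intro!: measurable_restrict_space1\<close>)
  also have "\<dots> = (\<integral>\<^sup>+x. ennreal (exp (- x)) * indicator {a..<b} x * indicator {0..} x \<partial>lborel)"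
    by (rule nn_integral_restrict_space) auto
  also have "\<dots> = (\<integral>\<^sup>+x. ennreal (exp (- x)) * indicator {a..<b} x \<partial>lborel)"
    by (rule nn_integral_cong) (use assms in \<open>auto simp: indicator_def\<close>)
  also have "\<dots> \<le> ennreal (exp (- a) - exp (- b))"
    by (rule nn_integral_exp_neg_interval_le) fact
  finally show "emeasure lifetime_measure {a..<b} \<le> ennreal (exp (- a) - exp (- b))" .
qed

type_synonym 'd cell_index = "'d cyc \<times> int \<times> nat"

definition cell :: "real \<Rightarrow> ('d::finite) cell_index \<Rightarrow> 'd point set" where
  "cell \<delta> c = (case c of (g, m, k) \<Rightarrow>
     {g} \<times> {real_of_int m * \<delta> ..< (real_of_int m + 1) * \<delta>} \<times> {real k * \<delta> ..< (real k + 1) * \<delta>})"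

definition cell_of :: "real \<Rightarrow> ('d::finite) point \<Rightarrow> 'd cell_index" where
  "cell_of \<delta> \<phi> = (case \<phi> of (g, t, s) \<Rightarrow> (g, \<lfloor>t / \<delta>\<rfloor>, nat \<lfloor>s / \<delta>\<rfloor>))"

lemma cell_of_simps [simp]:
  "fst (cell_of \<delta> \<phi>) = fst \<phi>"
  "fst (snd (cell_of \<delta> \<phi>)) = \<lfloor>fst (snd \<phi>) / \<delta>\<rfloor>"
  "snd (snd (cell_of \<delta> \<phi>)) = nat \<lfloor>snd (snd \<phi>) / \<delta>\<rfloor>"
  unfolding cell_of_def by (auto simp: case_prod_beta)

lemma mem_int_interval_iff:
  assumes "\<delta> > 0"
  shows "x \<in> {real_of_int m * \<delta> ..< (real_of_int m + 1) * \<delta>} \<longleftrightarrow> \<lfloor>x / \<delta>\<rfloor> = m"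
  using assms by (simp add: floor_eq_iff field_simps)

lemma mem_nat_interval_iff:
  assumes "\<delta> > 0"
  shows "x \<in> {real k * \<delta> ..< (real k + 1) * \<delta>} \<longleftrightarrow> x \<ge> 0 \<and> nat \<lfloor>x / \<delta>\<rfloor> = k"
proof -
  have "x \<in> {real k * \<delta> ..< (real k + 1) * \<delta>} \<longleftrightarrow> \<lfloor>x / \<delta>\<rfloor> = int k"
    using mem_int_interval_iff[OF assms, of x "int k"] by simp
  also have "\<dots> \<longleftrightarrow> x / \<delta> \<ge> 0 \<and> nat \<lfloor>x / \<delta>\<rfloor> = k"
    by (metis nat_int of_nat_0_le_iff zero_le_floor int_nat_eq nat_0_le)
  also have "\<dots> \<longleftrightarrow> x \<ge> 0 \<and> nat \<lfloor>x / \<delta>\<rfloor> = k"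
    using assms by (simp add: zero_le_divide_iff)
  finally show ?thesis .
qed

lemma mem_cell_iff:
  assumes "\<delta> > 0"
  shows "\<phi> \<in> cell \<delta> c \<longleftrightarrow> snd (snd \<phi>) \<ge> 0 \<and> cell_of \<delta> \<phi> = c"
  using mem_int_interval_iff[OF assms] mem_nat_interval_iff[OF assms]
  by (auto simp: cell_def cell_of_def split: prod.splits)

lemma disjoint_cells: "\<delta> > 0 \<Longrightarrow> c \<noteq> c' \<Longrightarrow> cell \<delta> c \<inter> cell \<delta> c' = {}"
  by (auto simp: mem_cell_iff)

definition lifetime_slot_mass :: "real \<Rightarrow> nat \<Rightarrow> real" where
  "lifetime_slot_mass \<delta> k = \<delta> * (exp (- (real k * \<delta>)) - exp (- ((real k + 1) * \<delta>)))"

lemma lifetime_slot_mass_nonneg: "\<delta> > 0 \<Longrightarrow> lifetime_slot_mass \<delta> k \<ge> 0"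
  unfolding lifetime_slot_mass_def by (auto simp: algebra_simps intro!: mult_nonneg_nonneg)

lemma cell_sets_emeasure_le:
  assumes "\<delta> > 0" "g \<in> cycles"
  shows "cell \<delta> (g, m, k) \<in> sets (intensity V \<alpha>)"
    "emeasure (intensity V \<alpha>) (cell \<delta> (g, m, k)) \<le> ennreal (weight V \<alpha> g * lifetime_slot_mass \<delta> k)"
proof -
  let ?W = "density (count_space cycles) (\<lambda>g. ennreal (weight V \<alpha> g))"
  let ?T = "{real_of_int m * \<delta> ..< (real_of_int m + 1) * \<delta>}"
  let ?a = "real k * \<delta>" and ?b = "(real k + 1) * \<delta>"
  have ab: "0 \<le> ?a" "?a \<le> ?b" using assms by (auto simp: algebra_simps)
  note L = lifetime_measure_interval[OF ab]
  have S: "{g} \<in> sets ?W" "?T \<times> {?a..<?b} \<in> sets (lborel \<Otimes>\<^sub>M lifetime_measure)"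
    using assms L(1) by auto
  show "cell \<delta> (g, m, k) \<in> sets (intensity V \<alpha>)"
    unfolding intensity_eq_pair_measure cell_def using S by auto
  interpret L: sigma_finite_measure lifetime_measure by (rule sigma_finite_lifetime_measure)
  interpret P: sigma_finite_measure "lborel \<Otimes>\<^sub>M lifetime_measure"
    by (rule sigma_finite_pair_measure) (auto simp: lborel.sigma_finite_measure_axioms L.sigma_finite_measure_axioms)
  have "emeasure (intensity V \<alpha>) (cell \<delta> (g, m, k))
      = emeasure ?W {g} * (emeasure lborel ?T * emeasure lifetime_measure {?a..<?b})"
    unfolding intensity_eq_pair_measure cell_def using S L(1)
    by (simp add: P.emeasure_pair_measure_Times L.emeasure_pair_measure_Times)
  also have "\<dots> = ennreal (weight V \<alpha> g) * (ennreal \<delta> * emeasure lifetime_measure {?a..<?b})"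
    using assms by (simp add: emeasure_density algebra_simps)
  also have "\<dots> \<le> ennreal (weight V \<alpha> g) * (ennreal \<delta> * ennreal (exp (- ?a) - exp (- ?b)))"
    by (intro mult_left_mono L(2)) auto
  also have "\<dots> = ennreal (weight V \<alpha> g * lifetime_slot_mass \<delta> k)"
    using assms weight_nonneg[of V \<alpha> g] unfolding lifetime_slot_mass_def
    by (simp add: ennreal_mult mult.assoc)
  finally show "emeasure (intensity V \<alpha>) (cell \<delta> (g, m, k)) \<le> ennreal (weight V \<alpha> g * lifetime_slot_mass \<delta> k)" .
qed

lemma cell_in_sets_intensity:
  "\<delta> > 0 \<Longrightarrow> fst c \<in> cycles \<Longrightarrow> cell \<delta> c \<in> sets (intensity V \<alpha>)"
  using cell_sets_emeasure_le(1) by (cases c) auto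

lemma emeasure_cell_finite:
  "\<delta> > 0 \<Longrightarrow> fst c \<in> cycles \<Longrightarrow> emeasure (intensity V \<alpha>) (cell \<delta> c) < \<infinity>"
  using cell_sets_emeasure_le(2)[THEN le_less_trans, OF _ _ ennreal_less_top] by (cases c) auto

section \<open>Cells that can contain ancestors\<close>

definition ancestor_cell :: "('d::finite) cyc \<Rightarrow> int \<Rightarrow> 'd cell_index \<Rightarrow> bool" where
  "ancestor_cell g m c \<longleftrightarrow> (case c of (g', m', k') \<Rightarrow>
     supp g' \<inter> supp g \<noteq> {} \<and> m' \<le> m \<and> m - m' \<le> int k' + 1)"

lemma ancestor_cell_of_anc1:
  assumes d: "\<delta> > 0" and x: "x \<in> anc1 Nw \<phi>" and s: "snd (snd x) \<ge> 0"
  shows "ancestor_cell (fst \<phi>) \<lfloor>fst (snd \<phi>) / \<delta>\<rfloor> (cell_of \<delta> x)"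
proof -
  obtain g t s0 where \<phi>: "\<phi> = (g, t, s0)" by (cases \<phi>) auto
  obtain g' t' s' where xx: "x = (g', t', s')" by (cases x) auto
  have A: "supp g' \<inter> supp g \<noteq> {}" "t' < t" "t < t' + s'" using x unfolding \<phi> xx anc1_def by auto
  have s': "s' \<ge> 0" using s xx by simp
  have m1: "\<lfloor>t' / \<delta>\<rfloor> \<le> \<lfloor>t / \<delta>\<rfloor>" using A(2) d by (intro floor_mono divide_right_mono) auto
  have "real_of_int \<lfloor>t / \<delta>\<rfloor> \<le> t / \<delta>" by (rule of_int_floor_le)
  also have "t / \<delta> < t' / \<delta> + s' / \<delta>"
    using A(3) d by (simp add: add_divide_distrib[symmetric] divide_strict_right_mono)
  also have "t' / \<delta> < real_of_int \<lfloor>t' / \<delta>\<rfloor> + 1" by (rule real_of_int_floor_add_one_gt)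
  also have "s' / \<delta> < real_of_int \<lfloor>s' / \<delta>\<rfloor> + 1" by (rule real_of_int_floor_add_one_gt)
  finally have "\<lfloor>t / \<delta>\<rfloor> - \<lfloor>t' / \<delta>\<rfloor> \<le> \<lfloor>s' / \<delta>\<rfloor> + 1" by linarith
  moreover have "\<lfloor>s' / \<delta>\<rfloor> \<ge> 0" using s' d by simp
  ultimately show ?thesis unfolding \<phi> xx ancestor_cell_def cell_of_def using A(1) m1 by auto
qed

text \<open>The total intensity of the cells that may contain an ancestor of a point in time slot \<open>m\<close>,
  per unit weight, is at most \<open>ancestor_factor \<delta>\<close>: a discretisation of
  \<open>\<integral>\<integral> [t' < t < t' + s] e\<^sup>-\<^sup>s ds dt' = 1\<close>, so it tends to \<open>1\<close> as \<open>\<delta> \<rightarrow> 0\<close>.\<close>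

definition ancestor_factor :: "real \<Rightarrow> real" where
  "ancestor_factor \<delta> = \<delta> * (1 + 1 / (1 - exp (- \<delta>)))"

lemma ancestor_factor_nonneg: "\<delta> > 0 \<Longrightarrow> ancestor_factor \<delta> \<ge> 0"
  unfolding ancestor_factor_def by (auto intro!: mult_nonneg_nonneg add_nonneg_nonneg)

lemma ancestor_factor_tendsto_1: "(ancestor_factor \<longlongrightarrow> 1) (at_right 0)"
  unfolding ancestor_factor_def by real_asymp

lemma sum_weighted_geometric_le:
  fixes q :: real
  assumes "0 \<le> q" "q < 1"
  shows "(\<Sum>k\<le>n. (real k + 2) * (q ^ k - q ^ Suc k)) \<le> 1 + 1 / (1 - q)"
proof -
  have telescope: "(\<Sum>k\<le>n. (real k + 2) * (q ^ k - q ^ Suc k))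
      = 1 + (\<Sum>k\<le>n. q ^ k) - (real n + 2) * q ^ Suc n"
    by (induction n) (auto simp: algebra_simps)
  have "(\<Sum>k\<le>n. q ^ k) = (\<Sum>k<Suc n. q ^ k)" by (simp add: lessThan_Suc_atMost)
  also have "\<dots> = (1 - q ^ Suc n) / (1 - q)" using assms by (simp only: sum_gp_strict) simp
  also have "\<dots> \<le> 1 / (1 - q)" using assms by (auto intro!: divide_right_mono)
  finally have "(\<Sum>k\<le>n. q ^ k) \<le> 1 / (1 - q)" .
  moreover have "(real n + 2) * q ^ Suc n \<ge> 0" using assms by auto
  ultimately show ?thesis unfolding telescope by linarith
qed

text \<open>For lifetime slot \<open>k\<close> there are only \<open>k + 2\<close> admissible birth slots.\<close>

lemma sum_lifetime_slot_mass_le: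
  assumes "\<delta> > 0" "finite T" "\<And>m' k. (m', k) \<in> T \<Longrightarrow> m' \<le> m \<and> m - m' \<le> int k + 1"
  shows "(\<Sum>(m', k)\<in>T. lifetime_slot_mass \<delta> k) \<le> ancestor_factor \<delta>"
proof -
  define q where "q = exp (- \<delta>)"
  have q: "0 \<le> q" "q < 1" using assms unfolding q_def by auto
  have slot_q: "lifetime_slot_mass \<delta> k = \<delta> * (q ^ k - q ^ Suc k)" for k
    unfolding q_def lifetime_slot_mass_def
    by (simp add: exp_of_nat_mult[symmetric] algebra_simps exp_add[symmetric])
  define n where "n = Max (insert 0 (snd ` T))"
  have kn: "k \<le> n" if "(m', k) \<in> T" for m' k
    unfolding n_def using assms(2) that by (intro Max_ge) force+
  have "(\<Sum>(m', k)\<in>T. lifetime_slot_mass \<delta> k) \<le> (\<Sum>(k, m')\<in>(SIGMA k:{..n}. {m - int k - 1 .. m}). lifetime_slot_mass \<delta> k)"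
  proof -
    have inj: "inj_on (\<lambda>(k::nat, m'::int). (m', k)) X" for X by (auto simp: inj_on_def)
    have "(\<Sum>(m', k)\<in>T. lifetime_slot_mass \<delta> k)
        \<le> (\<Sum>(m', k)\<in>(\<lambda>(k, m'). (m', k)) ` (SIGMA k:{..n}. {m - int k - 1 .. m}). lifetime_slot_mass \<delta> k)"
      using assms(3) kn
      by (intro sum_mono2) (force simp: image_iff lifetime_slot_mass_nonneg[OF assms(1)])+
    also have "\<dots> = (\<Sum>(k, m')\<in>(SIGMA k:{..n}. {m - int k - 1 .. m}). lifetime_slot_mass \<delta> k)"
      by (subst sum.reindex[OF inj]) (simp add: case_prod_beta)
    finally show ?thesis .
  qed
  also have "\<dots> = (\<Sum>k\<le>n. (real k + 2) * lifetime_slot_mass \<delta> k)"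
    by (subst sum.Sigma[symmetric]) (auto simp: nat_add_distrib add.commute)
  also have "\<dots> = \<delta> * (\<Sum>k\<le>n. (real k + 2) * (q ^ k - q ^ Suc k))"
    unfolding slot_q by (simp add: sum_distrib_left algebra_simps)
  also have "\<dots> \<le> \<delta> * (1 + 1 / (1 - q))"
    using sum_weighted_geometric_le[OF q] assms(1) by (intro mult_left_mono) auto
  finally show ?thesis unfolding ancestor_factor_def q_def .
qed

lemma emeasure_cell_le_slot_mass:
  assumes "\<delta> > 0" "fst c \<in> cycles"
  shows "emeasure (intensity V \<alpha>) (cell \<delta> c) * of_nat (card (supp (fst c)))
    \<le> beta_summand V \<alpha> (fst c) * ennreal (lifetime_slot_mass \<delta> (snd (snd c)))"
proof -
  obtain g m k where c: "c = (g, m, k)" by (cases c) auto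
  have "emeasure (intensity V \<alpha>) (cell \<delta> c) * of_nat (card (supp (fst c)))
      \<le> ennreal (weight V \<alpha> g * lifetime_slot_mass \<delta> k) * of_nat (card (supp g))"
    using cell_sets_emeasure_le(2)[of \<delta> g V \<alpha> m k] assms unfolding c by (auto intro!: mult_right_mono)
  also have "\<dots> = beta_summand V \<alpha> (fst c) * ennreal (lifetime_slot_mass \<delta> (snd (snd c)))"
    using weight_nonneg[of V \<alpha> g] lifetime_slot_mass_nonneg[OF assms(1), of k] unfolding c
    by (simp add: ennreal_mult'' ennreal_mult ennreal_of_nat_eq_real_of_nat mult_ac)
  finally show ?thesis .
qed

lemma sum_ancestor_cells_le:
  assumes d: "\<delta> > 0" and g: "g \<in> cycles" and K: "finite K"
    and K_anc: "\<And>c. c \<in> K \<Longrightarrow> fst c \<in> cycles \<and> ancestor_cell g m c"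
  shows "(\<Sum>c\<in>K. emeasure (intensity V \<alpha>) (cell \<delta> c) * of_nat (card (supp (fst c))))
           \<le> of_nat (card (supp g)) * beta V \<alpha> * ennreal (ancestor_factor \<delta>)"
proof -
  let ?slot = "\<lambda>c. ennreal (lifetime_slot_mass \<delta> (snd (snd c)))"
  have slice: "(\<Sum>c\<in>{c\<in>K. fst c = g'}. ?slot c) \<le> ennreal (ancestor_factor \<delta>)" for g'
  proof -
    have inj: "inj_on snd {c\<in>K. fst c = g'}" by (auto simp: inj_on_def prod_eq_iff)
    have "(\<Sum>c\<in>{c\<in>K. fst c = g'}. ?slot c)
        = ennreal (\<Sum>(m', k)\<in>snd ` {c\<in>K. fst c = g'}. lifetime_slot_mass \<delta> k)"
      by (simp add: sum.reindex[OF inj] sum_ennreal lifetime_slot_mass_nonneg[OF d] case_prod_beta)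
    also have "\<dots> \<le> ennreal (ancestor_factor \<delta>)"
      using K K_anc by (intro ennreal_leI sum_lifetime_slot_mass_le[OF d, where m = m])
        (auto simp: ancestor_cell_def)
    finally show ?thesis .
  qed
  have "(\<Sum>c\<in>K. emeasure (intensity V \<alpha>) (cell \<delta> c) * of_nat (card (supp (fst c))))
      \<le> (\<Sum>c\<in>K. beta_summand V \<alpha> (fst c) * ?slot c)"
    using K_anc by (intro sum_mono emeasure_cell_le_slot_mass[OF d]) auto
  also have "\<dots> = (\<Sum>g'\<in>fst ` K. \<Sum>c\<in>{c\<in>K. fst c = g'}. beta_summand V \<alpha> (fst c) * ?slot c)"
    using K by (intro sum.group[symmetric]) auto
  also have "\<dots> = (\<Sum>g'\<in>fst ` K. beta_summand V \<alpha> g' * (\<Sum>c\<in>{c\<in>K. fst c = g'}. ?slot c))"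
    by (simp add: sum_distrib_left)
  also have "\<dots> \<le> (\<Sum>g'\<in>fst ` K. beta_summand V \<alpha> g' * ennreal (ancestor_factor \<delta>))"
    by (intro sum_mono mult_left_mono slice) auto
  also have "\<dots> = (\<Sum>g'\<in>fst ` K. beta_summand V \<alpha> g') * ennreal (ancestor_factor \<delta>)"
    by (simp add: sum_distrib_right)
  also have "\<dots> \<le> of_nat (card (supp g)) * beta V \<alpha> * ennreal (ancestor_factor \<delta>)"
    using K K_anc
    by (intro mult_right_mono sum_beta_summand_meeting_le[OF _ _ _ g]) (auto simp: ancestor_cell_def)
  finally show ?thesis .
qed

section \<open>Poisson point processes\<close>

lemma poisson_tail_le:
  fixes l :: real assumes "l \<ge> 0"
  shows "1 - exp (- l) * (\<Sum>k<m. l ^ k / fact k) \<le> l ^ m"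
proof -
  obtain t where t: "\<bar>t\<bar> \<le> \<bar>l\<bar>" "exp l = (\<Sum>k<m. l ^ k / fact k) + exp t / fact m * l ^ m"
    using Maclaurin_exp_le[of l m] by blast
  have e1: "exp (- l) * exp l = 1" by (simp add: exp_minus_inverse mult.commute)
  have "(\<Sum>k<m. l ^ k / fact k) = exp l - exp t / fact m * l ^ m" using t(2) by simp
  then have "1 - exp (- l) * (\<Sum>k<m. l ^ k / fact k) = exp (- l) * (exp t / fact m * l ^ m)"
    using e1 by (simp add: right_diff_distrib)
  also have "\<dots> \<le> exp (- l) * (exp l * l ^ m)"
  proof (rule mult_left_mono)
    have "exp t / fact m \<le> exp t" by (simp add: divide_le_eq fact_ge_1 mult_le_cancel_left1)
    also have "\<dots> \<le> exp l" using t(1) assms by auto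
    finally show "exp t / fact m * l ^ m \<le> exp l * l ^ m" using assms by (intro mult_right_mono) auto
  qed simp
  also have "\<dots> = l ^ m" using e1 by (simp add: mult.assoc[symmetric])
  finally show ?thesis .
qed

lemma pp_prob_space: "poisson_point_process M \<mu> N \<Longrightarrow> prob_space M"
  unfolding poisson_point_process_def by blast

lemma pp_AE_finite:
  "poisson_point_process M \<mu> N \<Longrightarrow> B \<in> sets \<mu> \<Longrightarrow> emeasure \<mu> B < \<infinity> \<Longrightarrow> AE \<omega> in M. finite (N \<omega> \<inter> B)"
  unfolding poisson_point_process_def by blast

lemma pp_points_in_space:
  assumes "poisson_point_process M (intensity V \<alpha>) N" "\<omega> \<in> space M" "p \<in> N \<omega>"
  shows "fst p \<in> cycles \<and> snd (snd p) \<ge> 0"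
proof -
  from assms have "p \<in> space (intensity V \<alpha>)" unfolding poisson_point_process_def by blast
  then show ?thesis unfolding space_intensity by auto
qed

lemma pp_card_ge:
  assumes pp: "poisson_point_process M \<mu> N" and B: "B \<in> sets \<mu>" "emeasure \<mu> B < \<infinity>"
  shows "{\<omega>\<in>space M. n \<le> card (N \<omega> \<inter> B)} \<in> sets M"
    "emeasure M {\<omega>\<in>space M. n \<le> card (N \<omega> \<inter> B)} \<le> emeasure \<mu> B ^ n"
proof -
  interpret prob_space M using pp_prob_space[OF pp] .
  define A where "A k = {\<omega>\<in>space M. card (N \<omega> \<inter> B) = k}" for k
  define l where "l = enn2real (emeasure \<mu> B)"
  have A: "A k \<in> sets M" "prob (A k) = exp (- l) * l ^ k / fact k" for k
    using pp B unfolding poisson_point_process_def A_def l_def by auto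
  have eq: "{\<omega>\<in>space M. n \<le> card (N \<omega> \<inter> B)} = space M - (\<Union>k<n. A k)"
    unfolding A_def by auto
  show "{\<omega>\<in>space M. n \<le> card (N \<omega> \<inter> B)} \<in> sets M" unfolding eq using A(1) by auto
  have "prob (\<Union>k<n. A k) = (\<Sum>k<n. prob (A k))"
    by (rule finite_measure_finite_Union) (use A(1) in \<open>auto simp: disjoint_family_on_def A_def\<close>)
  then have "prob {\<omega>\<in>space M. n \<le> card (N \<omega> \<inter> B)} = 1 - exp (- l) * (\<Sum>k<n. l ^ k / fact k)"
    unfolding eq using A by (subst prob_compl) (auto simp: sum_distrib_left)
  also have "\<dots> \<le> l ^ n" by (rule poisson_tail_le) (simp add: l_def)
  finally have "emeasure M {\<omega>\<in>space M. n \<le> card (N \<omega> \<inter> B)} \<le> ennreal (l ^ n)"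
    by (simp add: emeasure_eq_measure ennreal_leI)
  also have "ennreal (l ^ n) = emeasure \<mu> B ^ n"
    using B(2) unfolding l_def by (simp add: ennreal_power[symmetric] ennreal_enn2real_if less_top[symmetric])
  finally show "emeasure M {\<omega>\<in>space M. n \<le> card (N \<omega> \<inter> B)} \<le> emeasure \<mu> B ^ n" .
qed

lemma pp_prob_Inter_card_ge:
  assumes pp: "poisson_point_process M \<mu> N" and I: "finite (I::nat set)" "I \<noteq> {}"
    and B: "disjoint_family_on B I" "\<And>i. i \<in> I \<Longrightarrow> B i \<in> sets \<mu> \<and> emeasure \<mu> (B i) < \<infinity>"
  shows "measure M (\<Inter>i\<in>I. {\<omega>\<in>space M. n i \<le> card (N \<omega> \<inter> B i)})
       = (\<Prod>i\<in>I. measure M {\<omega>\<in>space M. n i \<le> card (N \<omega> \<inter> B i)})"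
proof -
  interpret prob_space M using pp_prob_space[OF pp] .
  have "indep_vars (\<lambda>_. count_space UNIV) (\<lambda>i \<omega>. card (N \<omega> \<inter> B i)) I"
    using pp I B unfolding poisson_point_process_def by blast
  from indep_varsD_finite[OF this I(2,1), of "\<lambda>i. {n i..}"]
  have "prob (\<Inter>i\<in>I. (\<lambda>\<omega>. card (N \<omega> \<inter> B i)) -` {n i..} \<inter> space M)
      = (\<Prod>i\<in>I. prob ((\<lambda>\<omega>. card (N \<omega> \<inter> B i)) -` {n i..} \<inter> space M))"
    by simp
  moreover have "(\<lambda>\<omega>. card (N \<omega> \<inter> B i)) -` {n i..} \<inter> space M = {\<omega>\<in>space M. n i \<le> card (N \<omega> \<inter> B i)}" for i
    by auto
  ultimately show ?thesis by simp
qed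

text \<open>A chain of ancestors may pass through the same cell several times, hence the multiplicities.\<close>

definition occupied :: "'w measure \<Rightarrow> ('w \<Rightarrow> ('d::finite) point set) \<Rightarrow> real \<Rightarrow> 'd cell_index list \<Rightarrow> 'w set" where
  "occupied M N \<delta> L = {\<omega>\<in>space M. \<forall>c\<in>set L. count_list L c \<le> card (N \<omega> \<inter> cell \<delta> c)}"

lemma prod_list_map_eq_prod_count:
  "prod_list (map f xs) = (\<Prod>x\<in>set xs. f x ^ count_list xs x)"
  using image_prod_mset_multiplicity[of f "mset xs"]
  by (simp add: prod_mset_prod_list[symmetric] count_mset[symmetric] mset_map)

lemma occupied_in_sets:
  assumes pp: "poisson_point_process M (intensity V \<alpha>) N" and d: "\<delta> > 0"
    and L: "\<And>c. c \<in> set L \<Longrightarrow> fst c \<in> cycles"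
  shows "occupied M N \<delta> L \<in> sets M"
  unfolding occupied_def using L
  by (intro sets.sets_Collect_countable_All' pp_card_ge(1)[OF pp] cell_in_sets_intensity
      emeasure_cell_finite d) (auto intro: countable_finite)

lemma emeasure_occupied_le:
  fixes V :: "('d::finite) site \<Rightarrow> ereal"
  assumes pp: "poisson_point_process M (intensity V \<alpha>) N" and d: "\<delta> > 0"
    and L: "\<And>c. c \<in> set L \<Longrightarrow> fst c \<in> cycles"
  shows "emeasure M (occupied M N \<delta> L) \<le> prod_list (map (\<lambda>c. emeasure (intensity V \<alpha>) (cell \<delta> c)) L)"
proof (cases "L = []")
  case True
  interpret prob_space M using pp_prob_space[OF pp] .
  show ?thesis using True by (simp add: occupied_def emeasure_space_1)
next
  case False
  interpret prob_space M using pp_prob_space[OF pp] .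
  let ?\<mu> = "intensity V \<alpha>"
  define D where "D = remdups L"
  define I where "I = {..<length D}"
  define B where "B i = cell \<delta> (D ! i)" for i
  define n where "n i = count_list L (D ! i)" for i
  have I: "finite I" "I \<noteq> {}" using False by (auto simp: I_def D_def lessThan_empty_iff)
  have bij: "bij_betw ((!) D) I (set L)"
    unfolding I_def D_def by (metis bij_betw_nth distinct_remdups set_remdups)
  have ball: "(\<forall>c\<in>set L. P c) \<longleftrightarrow> (\<forall>i\<in>I. P (D ! i))" for P
    unfolding bij_betw_imp_surj_on[OF bij, symmetric] by simp
  have B: "B i \<in> sets ?\<mu> \<and> emeasure ?\<mu> (B i) < \<infinity>" if "i \<in> I" for i
    unfolding B_def using L[OF bij_betw_apply[OF bij that]]
    by (intro conjI cell_in_sets_intensity emeasure_cell_finite d)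
  have disj: "disjoint_family_on B I"
    using d by (auto simp: disjoint_family_on_def B_def I_def D_def nth_eq_iff_index_eq disjoint_cells)
  have eq: "occupied M N \<delta> L = (\<Inter>i\<in>I. {\<omega>\<in>space M. n i \<le> card (N \<omega> \<inter> B i)})"
    unfolding occupied_def n_def B_def ball using I(2) by blast
  have "emeasure M (occupied M N \<delta> L) = (\<Prod>i\<in>I. emeasure M {\<omega>\<in>space M. n i \<le> card (N \<omega> \<inter> B i)})"
    unfolding eq emeasure_eq_measure
    by (simp add: pp_prob_Inter_card_ge[OF pp I disj B] prod_ennreal)
  also have "\<dots> \<le> (\<Prod>i\<in>I. emeasure ?\<mu> (B i) ^ n i)"
    by (rule prod_mono_ennreal) (use pp_card_ge(2)[OF pp] B in auto)
  also have "\<dots> = (\<Prod>c\<in>set L. emeasure ?\<mu> (cell \<delta> c) ^ count_list L c)"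
    unfolding B_def n_def by (rule prod.reindex_bij_betw[OF bij])
  also have "\<dots> = prod_list (map (\<lambda>c. emeasure ?\<mu> (cell \<delta> c)) L)"
    by (rule prod_list_map_eq_prod_count[symmetric])
  finally show ?thesis .
qed

section \<open>Chains of ancestors\<close>

fun ancestor_chain :: "('d::finite) point set \<Rightarrow> 'd point \<Rightarrow> 'd point list \<Rightarrow> bool" where
  "ancestor_chain Nw \<phi> [] = True"
| "ancestor_chain Nw \<phi> (x # xs) = (x \<in> anc1 Nw \<phi> \<and> ancestor_chain Nw x xs)"

lemma anc1_subset: "anc1 Nw \<phi> \<subseteq> Nw"
  unfolding anc1_def by auto

lemma ancestor_chain_subset: "ancestor_chain Nw \<phi> xs \<Longrightarrow> set xs \<subseteq> Nw"
  by (induction xs arbitrary: \<phi>) (auto dest: subsetD[OF anc1_subset])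

lemma ancestor_chain_earlier: "ancestor_chain Nw \<phi> xs \<Longrightarrow> y \<in> set xs \<Longrightarrow> fst (snd y) < fst (snd \<phi>)"
proof (induction xs arbitrary: \<phi>)
  case (Cons x xs)
  then have x: "x \<in> anc1 Nw \<phi>" "ancestor_chain Nw x xs" by auto
  then have "fst (snd x) < fst (snd \<phi>)" by (auto simp: anc1_def)
  then show ?case using Cons.IH[OF x(2)] Cons.prems(2) by auto
qed simp

lemma ancestor_chain_distinct: "ancestor_chain Nw \<phi> xs \<Longrightarrow> distinct (\<phi> # xs)"
proof (induction xs arbitrary: \<phi>)
  case (Cons x xs)
  then show ?case using ancestor_chain_earlier[OF Cons.prems] by fastforce
qed simp

lemma ancestor_chain_append:
  "ancestor_chain Nw \<phi> (xs @ ys) \<longleftrightarrow> ancestor_chain Nw \<phi> xs \<and> ancestor_chain Nw (last (\<phi> # xs)) ys"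
  by (induction xs arbitrary: \<phi>) auto

lemma ancn_imp_ancestor_chain:
  "x \<in> ancn Nw n \<phi> \<Longrightarrow> \<exists>xs. length xs = n \<and> ancestor_chain Nw \<phi> (xs @ [x])"
proof (induction n arbitrary: x)
  case (Suc n)
  then obtain y where y: "y \<in> ancn Nw n \<phi>" "x \<in> anc1 Nw y" by auto
  with Suc.IH obtain ys where "length ys = n" "ancestor_chain Nw \<phi> (ys @ [y])" by blast
  with y(2) show ?case by (intro exI[of _ "ys @ [y]"]) (simp add: ancestor_chain_append)
qed auto

lemma finite_ancn:
  assumes "\<And>\<psi>. \<psi> \<in> Nw \<Longrightarrow> fst \<psi> \<in> cycles" "\<And>\<psi>. fst \<psi> \<in> cycles \<Longrightarrow> finite (anc1 Nw \<psi>)"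
    and "fst \<phi> \<in> cycles"
  shows "finite (ancn Nw n \<phi>)"
proof (induction n)
  case (Suc n)
  have "ancn Nw n \<phi> \<subseteq> Nw"
    by (cases n) (auto dest: subsetD[OF anc1_subset])
  then show ?case using Suc assms(1,2) by auto
qed (simp add: assms)

lemma ancn_empty_mono:
  assumes "ancn Nw n \<phi> = {}" "n \<le> p"
  shows "ancn Nw p \<phi> = {}"
  using assms(2) by (induction p rule: dec_induct) (simp_all add: assms(1))

lemma finite_clan_if_no_chain:
  assumes "\<And>\<psi>. \<psi> \<in> Nw \<Longrightarrow> fst \<psi> \<in> cycles" "\<And>\<psi>. fst \<psi> \<in> cycles \<Longrightarrow> finite (anc1 Nw \<psi>)"
    and "fst \<phi> \<in> cycles"
    and no_chain: "\<not> (\<exists>xs. length xs = n \<and> ancestor_chain Nw \<phi> xs)"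
  shows "finite (clan Nw \<phi>)"
proof -
  obtain k where n: "n = Suc k"
    using no_chain by (cases n) auto
  have empty: "ancn Nw k \<phi> = {}"
  proof (rule equals0I)
    fix x assume "x \<in> ancn Nw k \<phi>"
    then obtain xs where "length xs = k" "ancestor_chain Nw \<phi> (xs @ [x])"
      using ancn_imp_ancestor_chain by blast
    then show False using no_chain unfolding n by (metis length_append_singleton)
  qed
  have "clan Nw \<phi> \<subseteq> (\<Union>p<k. ancn Nw p \<phi>)"
  proof
    fix x assume "x \<in> clan Nw \<phi>"
    then obtain p where x: "x \<in> ancn Nw p \<phi>" unfolding clan_def by blast
    then have "p < k" using ancn_empty_mono[OF empty, of p] by (metis empty_iff not_less)
    then show "x \<in> (\<Union>p<k. ancn Nw p \<phi>)" using x by blast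
  qed
  moreover have "finite (\<Union>p<k. ancn Nw p \<phi>)"
    using finite_ancn[OF assms(1-3)] by blast
  ultimately show ?thesis by (rule finite_subset)
qed

fun cell_chain :: "('d::finite) cyc \<Rightarrow> int \<Rightarrow> 'd cell_index list \<Rightarrow> bool" where
  "cell_chain g m [] = True"
| "cell_chain g m (c # cs) = (ancestor_cell g m c \<and> cell_chain (fst c) (fst (snd c)) cs)"

definition cell_chains :: "('d::finite) cell_index set \<Rightarrow> nat \<Rightarrow> 'd cyc \<Rightarrow> int \<Rightarrow> 'd cell_index list set" where
  "cell_chains K n g m = {L. set L \<subseteq> K \<and> length L = n \<and> cell_chain g m L}"

lemma finite_cell_chains: "finite K \<Longrightarrow> finite (cell_chains K n g m)"
  unfolding cell_chains_def
  by (rule finite_subset[OF _ finite_lists_length_eq[of K n]]) auto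

lemma cell_chains_0: "cell_chains K 0 g m = {[]}"
  unfolding cell_chains_def by auto

lemma cell_chains_Suc:
  "cell_chains K (Suc n) g m =
     (\<lambda>(c, L). c # L) ` (SIGMA c:{c\<in>K. ancestor_cell g m c}. cell_chains K n (fst c) (fst (snd c)))"
  unfolding cell_chains_def by (auto simp: length_Suc_conv image_iff)

lemma cell_chains_mono: "K \<subseteq> K' \<Longrightarrow> cell_chains K n g m \<subseteq> cell_chains K' n g m"
  unfolding cell_chains_def by auto

lemma ancestor_chain_cell_chain:
  assumes "\<delta> > 0" "\<And>p. p \<in> Nw \<Longrightarrow> snd (snd p) \<ge> 0" "ancestor_chain Nw \<phi> xs"
  shows "cell_chain (fst \<phi>) \<lfloor>fst (snd \<phi>) / \<delta>\<rfloor> (map (cell_of \<delta>) xs)"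
  using assms(3)
proof (induction xs arbitrary: \<phi>)
  case (Cons x xs)
  then have x: "x \<in> anc1 Nw \<phi>" "ancestor_chain Nw x xs" by auto
  have "ancestor_cell (fst \<phi>) \<lfloor>fst (snd \<phi>) / \<delta>\<rfloor> (cell_of \<delta> x)"
    using ancestor_cell_of_anc1[OF assms(1) x(1)] assms(2) anc1_subset x(1) by blast
  then show ?case using Cons.IH[OF x(2)] by simp
qed simp

text \<open>The factor \<open>|supp g|\<close> counts the sites at which the next ancestor can meet \<open>g\<close>.\<close>

lemma sum_cell_chains_le:
  fixes V :: "('d::finite) site \<Rightarrow> ereal"
  assumes d: "\<delta> > 0" and K: "finite K" "\<And>c. c \<in> K \<Longrightarrow> fst c \<in> cycles" and g: "g \<in> cycles"
  shows "(\<Sum>L\<in>cell_chains K n g m. prod_list (map (\<lambda>c. emeasure (intensity V \<alpha>) (cell \<delta> c)) L))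
           \<le> of_nat (card (supp g)) * (beta V \<alpha> * ennreal (ancestor_factor \<delta>)) ^ n"
  using g
proof (induction n arbitrary: g m)
  case 0
  then show ?case using card_supp_cycle_ge_1[OF 0] by (simp add: cell_chains_0)
next
  case (Suc n)
  let ?\<mu> = "\<lambda>c. emeasure (intensity V \<alpha>) (cell \<delta> c)"
  let ?\<rho> = "beta V \<alpha> * ennreal (ancestor_factor \<delta>)"
  let ?C = "{c\<in>K. ancestor_cell g m c}"
  have finC: "finite ?C" using K(1) by simp
  have inj: "inj_on (\<lambda>(c, L). c # L) X" for X :: "('d cell_index \<times> 'd cell_index list) set"
    by (auto simp: inj_on_def)
  have "(\<Sum>L\<in>cell_chains K (Suc n) g m. prod_list (map ?\<mu> L))
      = (\<Sum>(c, L)\<in>(SIGMA c:?C. cell_chains K n (fst c) (fst (snd c))). prod_list (map ?\<mu> (c # L)))"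
    unfolding cell_chains_Suc by (subst sum.reindex[OF inj]) (simp add: case_prod_beta)
  also have "\<dots> = (\<Sum>c\<in>?C. \<Sum>L\<in>cell_chains K n (fst c) (fst (snd c)). ?\<mu> c * prod_list (map ?\<mu> L))"
    by (subst sum.Sigma[symmetric]) (auto simp: finC finite_cell_chains[OF K(1)])
  also have "\<dots> = (\<Sum>c\<in>?C. ?\<mu> c * (\<Sum>L\<in>cell_chains K n (fst c) (fst (snd c)). prod_list (map ?\<mu> L)))"
    by (simp add: sum_distrib_left)
  also have "\<dots> \<le> (\<Sum>c\<in>?C. ?\<mu> c * (of_nat (card (supp (fst c))) * ?\<rho> ^ n))"
    by (intro sum_mono mult_left_mono Suc.IH) (auto simp: K(2))
  also have "\<dots> = (\<Sum>c\<in>?C. ?\<mu> c * of_nat (card (supp (fst c)))) * ?\<rho> ^ n"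
    by (simp add: sum_distrib_right mult.assoc)
  also have "\<dots> \<le> (of_nat (card (supp g)) * beta V \<alpha> * ennreal (ancestor_factor \<delta>)) * ?\<rho> ^ n"
    by (intro mult_right_mono sum_ancestor_cells_le[OF d Suc.prems finC]) (auto simp: K(2))
  finally show ?case by (simp add: mult_ac)
qed

definition cells_upto :: "nat \<Rightarrow> ('d::finite) cell_index set" where
  "cells_upto j = {c. fst c \<in> cycles \<and> to_nat_on cycles (fst c) \<le> j \<and>
     \<bar>fst (snd c)\<bar> \<le> int j \<and> snd (snd c) \<le> j}"

lemma finite_cells_upto: "finite (cells_upto j)"
proof -
  let ?A = "{g \<in> cycles. to_nat_on cycles g \<le> j}"
  have "finite ?A"
    by (rule inj_on_finite[of "to_nat_on cycles" _ "{..j}"])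
       (auto intro: inj_on_subset[OF inj_on_to_nat_on[OF countable_cycles]])
  moreover have "cells_upto j \<subseteq> ?A \<times> {- int j..int j} \<times> {..j}"
    unfolding cells_upto_def by auto
  moreover have "finite (?A \<times> {- int j..int j} \<times> {..j})" using \<open>finite ?A\<close> by auto
  ultimately show ?thesis using finite_subset by blast
qed

lemma cells_upto_mono: "j \<le> j' \<Longrightarrow> cells_upto j \<subseteq> cells_upto j'"
  unfolding cells_upto_def by auto

lemma cells_upto_cycles: "c \<in> cells_upto j \<Longrightarrow> fst c \<in> cycles"
  unfolding cells_upto_def by auto

lemma finite_subset_cells_upto:
  fixes C :: "('d::finite) cell_index set"
  assumes "finite C" "\<And>c. c \<in> C \<Longrightarrow> fst c \<in> cycles"
  shows "\<exists>j. C \<subseteq> cells_upto j"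
proof
  define rank :: "'d cell_index \<Rightarrow> nat"
    where "rank c = to_nat_on cycles (fst c) + nat \<bar>fst (snd c)\<bar> + snd (snd c)" for c
  define j where "j = (\<Sum>c\<in>C. rank c)"
  show "C \<subseteq> cells_upto j"
  proof
    fix c assume "c \<in> C"
    then have "rank c \<le> j" unfolding j_def using assms(1) by (intro member_le_sum) auto
    then have "to_nat_on cycles (fst c) \<le> j" "\<bar>fst (snd c)\<bar> \<le> int j" "snd (snd c) \<le> j"
      unfolding rank_def by linarith+
    then show "c \<in> cells_upto j" using assms(2)[OF \<open>c \<in> C\<close>] unfolding cells_upto_def by auto
  qed
qed

section \<open>Almost sure finiteness of the clans\<close>

lemma ancestor_factor_contraction:
  assumes "beta V \<alpha> < 1"
  obtains \<delta> r where "\<delta> > 0" "beta V \<alpha> * ennreal (ancestor_factor \<delta>) = ennreal r" "0 \<le> r" "r < 1"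
proof -
  define B where "B = enn2real (beta V \<alpha>)"
  have "beta V \<alpha> < top" using order.strict_trans[OF assms, of top] by simp
  then have bB: "beta V \<alpha> = ennreal B" unfolding B_def by (simp add: ennreal_enn2real_if)
  have "ennreal B < ennreal 1" using assms bB by simp
  then have B: "0 \<le> B" "B < 1" by (auto simp: B_def ennreal_less_iff)
  have "((\<lambda>\<delta>. B * ancestor_factor \<delta>) \<longlongrightarrow> B * 1) (at_right 0)"
    by (intro tendsto_mult tendsto_const ancestor_factor_tendsto_1)
  then have "eventually (\<lambda>\<delta>. B * ancestor_factor \<delta> < 1) (at_right (0::real))"
    using B by (intro order_tendstoD(2)) auto
  then have "eventually (\<lambda>\<delta>. 0 < \<delta> \<and> B * ancestor_factor \<delta> < 1) (at_right (0::real))"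
    by (intro eventually_conj eventually_at_right_less)
  then obtain \<delta> where \<delta>: "\<delta> > 0" "B * ancestor_factor \<delta> < 1"
    using eventually_happens[of _ "at_right (0::real)"] by auto
  show ?thesis
    by (rule that[OF \<delta>(1) _ _ \<delta>(2)]) (use B ancestor_factor_nonneg[OF \<delta>(1)] in \<open>simp_all add: bB ennreal_mult''\<close>)
qed

lemma ennreal_le_mult_power_imp_zero:
  fixes x C :: ennreal and r :: real
  assumes "\<And>n. x \<le> C * ennreal r ^ n" "C < top" "0 \<le> r" "r < 1"
  shows "x = 0"
proof -
  have "(\<lambda>n. C * ennreal (r ^ n)) \<longlonglongrightarrow> C * ennreal 0"
    by (intro ennreal_tendsto_cmult[OF assms(2)] tendsto_ennrealI LIMSEQ_power_zero) (use assms in auto)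
  then have "(\<lambda>n. C * ennreal r ^ n) \<longlonglongrightarrow> 0"
    using assms(3) by (simp add: ennreal_power)
  then have "x \<le> 0"
    by (rule tendsto_le[OF trivial_limit_sequentially _ tendsto_const]) (use assms(1) in auto)
  then show ?thesis by simp
qed

lemma AE_finite_cells:
  assumes pp: "poisson_point_process M (intensity V \<alpha>) N" and d: "\<delta> > 0"
  shows "AE \<omega> in M. \<forall>c. fst c \<in> cycles \<longrightarrow> finite (N \<omega> \<inter> cell \<delta> c)"
proof -
  have "AE \<omega> in M. \<forall>c\<in>cycles \<times> UNIV. finite (N \<omega> \<inter> cell \<delta> c)"
    by (subst AE_ball_countable)
       (auto intro!: countable_SIGMA countable_cycles pp_AE_finite[OF pp] cell_in_sets_intensity
          emeasure_cell_finite d)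
  then show ?thesis by (rule AE_mp) (auto simp: mem_Times_iff)
qed

lemma count_list_map_distinct: "distinct xs \<Longrightarrow> count_list (map f xs) c = card {x\<in>set xs. f x = c}"
  by (simp add: count_list_eq_length_filter filter_map o_def distinct_card[symmetric] eq_commute)

lemma ancestor_chain_occupied:
  assumes d: "\<delta> > 0" and \<omega>: "\<omega> \<in> space M"
    and nonneg: "\<And>p. p \<in> N \<omega> \<Longrightarrow> fst p \<in> cycles \<and> snd (snd p) \<ge> 0"
    and fin: "\<And>c. fst c \<in> cycles \<Longrightarrow> finite (N \<omega> \<inter> cell \<delta> c)"
    and ch: "ancestor_chain (N \<omega>) \<phi> xs"
  shows "\<omega> \<in> occupied M N \<delta> (map (cell_of \<delta>) xs)"
proof -
  have "count_list (map (cell_of \<delta>) xs) c \<le> card (N \<omega> \<inter> cell \<delta> c)"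
    if "c \<in> set (map (cell_of \<delta>) xs)" for c
  proof -
    obtain p where p: "p \<in> set xs" "c = cell_of \<delta> p" using \<open>c \<in> set (map (cell_of \<delta>) xs)\<close> by auto
    have "fst c \<in> cycles" using p nonneg[OF subsetD[OF ancestor_chain_subset[OF ch] p(1)]] by simp
    have sub: "{x\<in>set xs. cell_of \<delta> x = c} \<subseteq> N \<omega> \<inter> cell \<delta> c"
      using ancestor_chain_subset[OF ch] nonneg by (auto simp: mem_cell_iff[OF d])
    have "count_list (map (cell_of \<delta>) xs) c = card {x\<in>set xs. cell_of \<delta> x = c}"
      using ancestor_chain_distinct[OF ch] by (simp add: count_list_map_distinct)
    also have "\<dots> \<le> card (N \<omega> \<inter> cell \<delta> c)"
      using card_mono[OF fin sub] \<open>fst c \<in> cycles\<close> by blast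
    finally show ?thesis .
  qed
  then show ?thesis unfolding occupied_def using \<omega> by blast
qed

text \<open>The finite sets \<open>cells_upto j\<close> increase to the set of all cells.\<close>

definition chain_event :: "'w measure \<Rightarrow> ('w \<Rightarrow> ('d::finite) point set) \<Rightarrow> real \<Rightarrow> nat \<Rightarrow> 'd cyc \<Rightarrow> int \<Rightarrow> 'w set" where
  "chain_event M N \<delta> n g m = (\<Union>j. \<Union>L\<in>cell_chains (cells_upto j) n g m. occupied M N \<delta> L)"

lemma ancestor_chain_in_chain_event:
  assumes d: "\<delta> > 0" and \<omega>: "\<omega> \<in> space M"
    and nonneg: "\<And>p. p \<in> N \<omega> \<Longrightarrow> fst p \<in> cycles \<and> snd (snd p) \<ge> 0"
    and fin: "\<And>c. fst c \<in> cycles \<Longrightarrow> finite (N \<omega> \<inter> cell \<delta> c)"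
    and ch: "ancestor_chain (N \<omega>) \<phi> xs"
  shows "\<omega> \<in> chain_event M N \<delta> (length xs) (fst \<phi>) \<lfloor>fst (snd \<phi>) / \<delta>\<rfloor>"
proof -
  let ?L = "map (cell_of \<delta>) xs"
  have "fst c \<in> cycles" if c: "c \<in> set ?L" for c
  proof -
    obtain p where "p \<in> set xs" "c = cell_of \<delta> p" using c by auto
    then show ?thesis using nonneg[OF subsetD[OF ancestor_chain_subset[OF ch]]] by simp
  qed
  then obtain j where "set ?L \<subseteq> cells_upto j"
    using finite_subset_cells_upto[of "set ?L"] by blast
  moreover have "cell_chain (fst \<phi>) \<lfloor>fst (snd \<phi>) / \<delta>\<rfloor> ?L"
    using ancestor_chain_cell_chain[OF d _ ch] nonneg by blast
  ultimately have "?L \<in> cell_chains (cells_upto j) (length xs) (fst \<phi>) \<lfloor>fst (snd \<phi>) / \<delta>\<rfloor>"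
    unfolding cell_chains_def by simp
  then show ?thesis
    unfolding chain_event_def
    using ancestor_chain_occupied[where M = M and N = N, OF d \<omega> nonneg fin ch] by blast
qed

lemma chain_event_sets_emeasure_le:
  fixes V :: "('d::finite) site \<Rightarrow> ereal"
  assumes pp: "poisson_point_process M (intensity V \<alpha>) N" and d: "\<delta> > 0" and g: "g \<in> cycles"
  shows "chain_event M N \<delta> n g m \<in> sets M"
    "emeasure M (chain_event M N \<delta> n g m) \<le> of_nat (card (supp g)) * (beta V \<alpha> * ennreal (ancestor_factor \<delta>)) ^ n"
proof -
  define G where "G j = (\<Union>L\<in>cell_chains (cells_upto j) n g m. occupied M N \<delta> L)" for j
  have L_cycles: "fst c \<in> cycles" if "L \<in> cell_chains (cells_upto j) n g m" "c \<in> set L" for L j c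
    using that cells_upto_cycles unfolding cell_chains_def by blast
  have G: "G j \<in> sets M" for j
    unfolding G_def using L_cycles
    by (intro sets.finite_UN finite_cell_chains finite_cells_upto occupied_in_sets[OF pp d]) auto
  then show "chain_event M N \<delta> n g m \<in> sets M" unfolding chain_event_def G_def[symmetric] by auto
  have "incseq G"
    unfolding incseq_def G_def using cell_chains_mono[OF cells_upto_mono] by blast
  have "emeasure M (G j) \<le> of_nat (card (supp g)) * (beta V \<alpha> * ennreal (ancestor_factor \<delta>)) ^ n" for j
  proof -
    have "emeasure M (G j) \<le> (\<Sum>L\<in>cell_chains (cells_upto j) n g m. emeasure M (occupied M N \<delta> L))"
      unfolding G_def using L_cycles
      by (intro emeasure_subadditive_finite finite_cell_chains finite_cells_upto)
         (auto intro!: occupied_in_sets[OF pp d])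
    also have "\<dots> \<le> (\<Sum>L\<in>cell_chains (cells_upto j) n g m.
        prod_list (map (\<lambda>c. emeasure (intensity V \<alpha>) (cell \<delta> c)) L))"
      using L_cycles by (intro sum_mono emeasure_occupied_le[OF pp d]) auto
    also have "\<dots> \<le> of_nat (card (supp g)) * (beta V \<alpha> * ennreal (ancestor_factor \<delta>)) ^ n"
      by (intro sum_cell_chains_le[OF d finite_cells_upto _ g]) (auto dest: cells_upto_cycles)
    finally show ?thesis .
  qed
  then show "emeasure M (chain_event M N \<delta> n g m)
      \<le> of_nat (card (supp g)) * (beta V \<alpha> * ennreal (ancestor_factor \<delta>)) ^ n"
    unfolding chain_event_def G_def[symmetric] using SUP_emeasure_incseq[OF _ \<open>incseq G\<close>] G
    by (metis SUP_least image_subset_iff rangeE)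
qed

lemma AE_outside_some_chain_event:
  fixes V :: "('d::finite) site \<Rightarrow> ereal" and N :: "'w \<Rightarrow> 'd point set"
  assumes pp: "poisson_point_process M (intensity V \<alpha>) N" and d: "\<delta> > 0" and g: "g \<in> cycles"
    and r: "beta V \<alpha> * ennreal (ancestor_factor \<delta>) = ennreal r" "0 \<le> r" "r < 1"
  shows "AE \<omega> in M. \<exists>n. \<omega> \<notin> chain_event M N \<delta> n g m"
proof (rule AE_I')
  show "(\<Inter>n. chain_event M N \<delta> n g m) \<in> null_sets M"
  proof (rule null_setsI)
    note E = chain_event_sets_emeasure_le[OF pp d g, of _ m, unfolded r]
    show "(\<Inter>n. chain_event M N \<delta> n g m) \<in> sets M" using E(1) by auto
    have "emeasure M (\<Inter>n. chain_event M N \<delta> n g m) \<le> of_nat (card (supp g)) * ennreal r ^ n" for n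
      using emeasure_mono[OF INT_lower[OF UNIV_I, where B = "\<lambda>n. chain_event M N \<delta> n g m"] E(1)] E(2)
      by (rule order_trans)
    then show "emeasure M (\<Inter>n. chain_event M N \<delta> n g m) = 0"
      by (rule ennreal_le_mult_power_imp_zero) (use r in \<open>auto simp: of_nat_less_top\<close>)
  qed
qed auto

lemma AE_bounded_ancestor_chains:
  fixes V :: "('d::finite) site \<Rightarrow> ereal" and N :: "'w \<Rightarrow> 'd point set"
  assumes pp: "poisson_point_process M (intensity V \<alpha>) N" and d: "\<delta> > 0"
    and r: "beta V \<alpha> * ennreal (ancestor_factor \<delta>) = ennreal r" "0 \<le> r" "r < 1"
  shows "AE \<omega> in M. \<forall>g\<in>cycles. \<forall>m. \<exists>n. \<forall>t s. \<lfloor>t / \<delta>\<rfloor> = m \<longrightarrow>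
     \<not> (\<exists>xs. length xs = n \<and> ancestor_chain (N \<omega>) (g, t, s) xs)"
proof -
  have "AE \<omega> in M. \<forall>gm\<in>cycles \<times> UNIV. \<exists>n. \<omega> \<notin> chain_event M N \<delta> n (fst gm) (snd gm)"
    using AE_outside_some_chain_event[OF pp d _ r]
    by (subst AE_ball_countable) (auto intro: countable_SIGMA countable_cycles)
  then show ?thesis using AE_finite_cells[OF pp d] AE_space
  proof eventually_elim
    case (elim \<omega>)
    have nonneg: "\<And>p. p \<in> N \<omega> \<Longrightarrow> fst p \<in> cycles \<and> snd (snd p) \<ge> 0"
      using pp_points_in_space[OF pp elim(3)] by blast
    have fin: "\<And>c. fst c \<in> cycles \<Longrightarrow> finite (N \<omega> \<inter> cell \<delta> c)" using elim(2) by blast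
    show ?case
    proof (intro ballI allI)
      fix g :: "'d cyc" and m assume "g \<in> cycles"
      then obtain n where n: "\<omega> \<notin> chain_event M N \<delta> n g m" using elim(1) by fastforce
      have "\<not> (\<exists>xs. length xs = n \<and> ancestor_chain (N \<omega>) (g, t, s) xs)" if "\<lfloor>t / \<delta>\<rfloor> = m" for t s
        using ancestor_chain_in_chain_event[where M = M and N = N, OF d elim(3) nonneg fin] n that
        by fastforce
      then show "\<exists>n. \<forall>t s. \<lfloor>t / \<delta>\<rfloor> = m \<longrightarrow> \<not> (\<exists>xs. length xs = n \<and> ancestor_chain (N \<omega>) (g, t, s) xs)"
        by blast
    qed
  qed
qed

definition ancestor_region :: "real \<Rightarrow> ('d::finite) cyc \<Rightarrow> int \<Rightarrow> nat \<Rightarrow> 'd point set" where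
  "ancestor_region \<delta> g m j = (\<Union>c\<in>{c\<in>cells_upto j. ancestor_cell g m c}. cell \<delta> c)"

lemma anc1_subset_ancestor_region:
  assumes d: "\<delta> > 0" and nonneg: "\<And>p. p \<in> Nw \<Longrightarrow> fst p \<in> cycles \<and> snd (snd p) \<ge> 0"
  shows "anc1 Nw \<phi> \<subseteq> Nw \<inter> (\<Union>j. ancestor_region \<delta> (fst \<phi>) \<lfloor>fst (snd \<phi>) / \<delta>\<rfloor> j)"
proof
  fix x assume x: "x \<in> anc1 Nw \<phi>"
  then have xN: "x \<in> Nw" using anc1_subset by blast
  obtain j where j: "cell_of \<delta> x \<in> cells_upto j"
    using finite_subset_cells_upto[of "{cell_of \<delta> x}"] nonneg[OF xN] by auto
  have "x \<in> cell \<delta> (cell_of \<delta> x)" using nonneg[OF xN] by (simp add: mem_cell_iff[OF d])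
  then have "x \<in> ancestor_region \<delta> (fst \<phi>) \<lfloor>fst (snd \<phi>) / \<delta>\<rfloor> j"
    unfolding ancestor_region_def using j ancestor_cell_of_anc1[OF d x] nonneg[OF xN] by blast
  then show "x \<in> Nw \<inter> (\<Union>j. ancestor_region \<delta> (fst \<phi>) \<lfloor>fst (snd \<phi>) / \<delta>\<rfloor> j)" using xN by blast
qed

lemma ancestor_region_sets_emeasure_le:
  fixes V :: "('d::finite) site \<Rightarrow> ereal"
  assumes d: "\<delta> > 0" and g: "g \<in> cycles"
  shows "ancestor_region \<delta> g m j \<in> sets (intensity V \<alpha>)"
    "emeasure (intensity V \<alpha>) (ancestor_region \<delta> g m j)
       \<le> of_nat (card (supp g)) * beta V \<alpha> * ennreal (ancestor_factor \<delta>)"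
proof -
  let ?C = "{c\<in>cells_upto j. ancestor_cell g m c}"
  have C: "finite ?C" "\<And>c. c \<in> ?C \<Longrightarrow> fst c \<in> cycles"
    using finite_cells_upto[of j] cells_upto_cycles by auto
  have S: "cell \<delta> c \<in> sets (intensity V \<alpha>)" if "c \<in> ?C" for c
    using cell_in_sets_intensity[OF d C(2)[OF that]] .
  show "ancestor_region \<delta> g m j \<in> sets (intensity V \<alpha>)"
    unfolding ancestor_region_def using C(1) S by auto
  have "emeasure (intensity V \<alpha>) (ancestor_region \<delta> g m j) \<le> (\<Sum>c\<in>?C. emeasure (intensity V \<alpha>) (cell \<delta> c))"
    unfolding ancestor_region_def by (rule emeasure_subadditive_finite[OF C(1)]) (use S in blast)
  also have "\<dots> \<le> (\<Sum>c\<in>?C. emeasure (intensity V \<alpha>) (cell \<delta> c) * of_nat (card (supp (fst c))))"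
  proof (rule sum_mono)
    fix c assume "c \<in> ?C"
    then have "(1::ennreal) \<le> of_nat (card (supp (fst c)))" using card_supp_cycle_ge_1[OF C(2)] by simp
    then show "emeasure (intensity V \<alpha>) (cell \<delta> c)
        \<le> emeasure (intensity V \<alpha>) (cell \<delta> c) * of_nat (card (supp (fst c)))"
      using mult_left_mono[of 1 _ "emeasure (intensity V \<alpha>) (cell \<delta> c)"] by simp
  qed
  also have "\<dots> \<le> of_nat (card (supp g)) * beta V \<alpha> * ennreal (ancestor_factor \<delta>)"
    using C by (intro sum_ancestor_cells_le[OF d g]) auto
  finally show "emeasure (intensity V \<alpha>) (ancestor_region \<delta> g m j)
      \<le> of_nat (card (supp g)) * beta V \<alpha> * ennreal (ancestor_factor \<delta>)" .
qed

lemma AE_finite_anc1: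
  fixes V :: "('d::finite) site \<Rightarrow> ereal" and N :: "'w \<Rightarrow> 'd point set"
  assumes pp: "poisson_point_process M (intensity V \<alpha>) N" and beta: "beta V \<alpha> < \<infinity>"
  shows "AE \<omega> in M. \<forall>\<psi>. fst \<psi> \<in> cycles \<longrightarrow> finite (anc1 (N \<omega>) \<psi>)"
proof -
  let ?R = "\<lambda>g m. \<Union>j. ancestor_region 1 g m j"
  have "AE \<omega> in M. finite (N \<omega> \<inter> ?R g m)" if g: "g \<in> cycles" for g m
  proof (rule pp_AE_finite[OF pp])
    note R = ancestor_region_sets_emeasure_le[OF zero_less_one g, where V = V and \<alpha> = \<alpha> and m = m]
    show "?R g m \<in> sets (intensity V \<alpha>)" using R(1) by blast
    have "incseq (ancestor_region 1 g m)"
      unfolding incseq_def ancestor_region_def using cells_upto_mono by blast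
    then have "emeasure (intensity V \<alpha>) (?R g m) \<le> of_nat (card (supp g)) * beta V \<alpha> * ennreal (ancestor_factor 1)"
      using SUP_emeasure_incseq[of "ancestor_region 1 g m"] R by (metis SUP_least image_subset_iff rangeE)
    also have "\<dots> < \<infinity>" using beta by (simp add: ennreal_mult_less_top of_nat_less_top)
    finally show "emeasure (intensity V \<alpha>) (?R g m) < \<infinity>" .
  qed
  then have "AE \<omega> in M. \<forall>gm\<in>cycles \<times> UNIV. finite (N \<omega> \<inter> ?R (fst gm) (snd gm))"
    by (subst AE_ball_countable) (auto intro: countable_SIGMA countable_cycles)
  then show ?thesis using AE_space
  proof eventually_elim
    case (elim \<omega>)
    have nonneg: "\<And>p. p \<in> N \<omega> \<Longrightarrow> fst p \<in> cycles \<and> snd (snd p) \<ge> 0"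
      using pp_points_in_space[OF pp elim(2)] by blast
    show ?case
    proof (intro allI impI)
      fix \<psi> :: "'d point" assume "fst \<psi> \<in> cycles"
      then have "finite (N \<omega> \<inter> ?R (fst \<psi>) \<lfloor>fst (snd \<psi>) / 1\<rfloor>)" using elim(1) by simp
      moreover have "anc1 (N \<omega>) \<psi> \<subseteq> N \<omega> \<inter> ?R (fst \<psi>) \<lfloor>fst (snd \<psi>) / 1\<rfloor>"
        by (rule anc1_subset_ancestor_region) (use nonneg in auto)
      ultimately show "finite (anc1 (N \<omega>) \<psi>)" by (rule finite_subset[rotated])
    qed
  qed
qed

theorem corollary3p7:
  fixes V :: "('d::finite) site \<Rightarrow> ereal" and \<alpha> :: real
    and M :: "'w measure" and N :: "'w \<Rightarrow> 'd point set"
  assumes "\<And>x. V x \<ge> 0"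
    and "strictly_convex_lattice V"
    and "V 0 = 0"
    and "\<alpha> > 0"
    and "ereal \<alpha> > alpha_star V"
    and "poisson_point_process M (intensity V \<alpha>) N"
  shows "AE \<omega> in M. \<forall>g\<in>cycles. \<forall>t s. s \<ge> 0 \<longrightarrow> finite (clan (N \<omega>) (g, t, s))"
proof -
  note pp = assms(6)
  have beta: "beta V \<alpha> < 1" using beta_less_1[OF assms(1,5)] .
  then obtain \<delta> r where \<delta>: "\<delta> > 0" "beta V \<alpha> * ennreal (ancestor_factor \<delta>) = ennreal r" "0 \<le> r" "r < 1"
    by (rule ancestor_factor_contraction)
  have "beta V \<alpha> < \<infinity>" using order.strict_trans[OF beta, of top] by simp
  then have anc1: "AE \<omega> in M. \<forall>\<psi>. fst \<psi> \<in> cycles \<longrightarrow> finite (anc1 (N \<omega>) \<psi>)"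
    by (rule AE_finite_anc1[OF pp])
  show ?thesis using AE_bounded_ancestor_chains[OF pp \<delta>] anc1 AE_space
  proof eventually_elim
    case (elim \<omega>)
    have cycles: "\<And>\<psi>. \<psi> \<in> N \<omega> \<Longrightarrow> fst \<psi> \<in> cycles" using pp_points_in_space[OF pp elim(3)] by blast
    show ?case
    proof (intro ballI allI impI)
      fix g :: "'d cyc" and t s :: real assume "g \<in> cycles"
      moreover obtain n where "\<not> (\<exists>xs. length xs = n \<and> ancestor_chain (N \<omega>) (g, t, s) xs)"
        using elim(1) \<open>g \<in> cycles\<close> by blast
      ultimately show "finite (clan (N \<omega>) (g, t, s))"
        using finite_clan_if_no_chain[where Nw = "N \<omega>" and \<phi> = "(g, t, s)", OF cycles elim(2)[rule_format]]
        by simp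
    qed
  qed
qed

end
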